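(* Let $d\ge 2$ and $0<\delta<\frac{\pi}{2}$. Every convex body $D\subset S^d$ of constant diameter $\delta$ is strictly convex, i.e., $\mathrm{bd}(D)$ contains no arc.
   Context: $S^d$ is the unit sphere in $E^{d+1}$; for non-antipodal points $a,b$, the arc $ab$ is the shorter great-circle arc joining them and $|ab|$ is its length. A set $C\subset S^d$ containing no pair of antipodes is convex if it contains the arc joining any two of its points; a closed convex set with non-empty interior is a convex body. A convex body $D$ of diameter $\delta$ (the maximum spherical distance between two of its points) is of constant diameter $\delta$ if for every $p\in\mathrm{bd}(D)$ there exists $p'\in\mathrm{bd}(D)$ with $|pp'|=\delta$. *)

theory Defs
  imports "HOL-Analysis.Analysis"
begin

text \<open>The unit sphere S^d in E^(d+1), where E^(d+1) is modelled by a Euclidean space 'a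
  with DIM('a) = d+1.\<close>

abbreviation Sph :: "'a::euclidean_space set" where
  "Sph \<equiv> sphere 0 1"

definition sdist :: "'a::euclidean_space \<Rightarrow> 'a \<Rightarrow> real" where
  "sdist a b = arccos (a \<bullet> b)"

text \<open>The shorter great-circle arc joining non-antipodal points a, b of the sphere:
  the radial projection of the chord [a,b] onto the sphere.\<close>
definition sarc :: "'a::euclidean_space \<Rightarrow> 'a \<Rightarrow> 'a set" where
  "sarc a b = (\<lambda>x. x /\<^sub>R norm x) ` closed_segment a b"

definition sconvex :: "'a::euclidean_space set \<Rightarrow> bool" where
  "sconvex C \<longleftrightarrow> C \<subseteq> Sph \<and> (\<forall>x\<in>C. - x \<notin> C) \<and> (\<forall>a\<in>C. \<forall>b\<in>C. sarc a b \<subseteq> C)"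

definition sinterior :: "'a::euclidean_space set \<Rightarrow> 'a set" where
  "sinterior C = (top_of_set Sph) interior_of C"

definition sboundary :: "'a::euclidean_space set \<Rightarrow> 'a set" where
  "sboundary C = (top_of_set Sph) frontier_of C"

definition sconvex_body :: "'a::euclidean_space set \<Rightarrow> bool" where
  "sconvex_body C \<longleftrightarrow> sconvex C \<and> closed C \<and> sinterior C \<noteq> {}"

definition sdiameter :: "'a::euclidean_space set \<Rightarrow> real" where
  "sdiameter C = Sup {sdist p q | p q. p \<in> C \<and> q \<in> C}"

definition const_diameter :: "'a::euclidean_space set \<Rightarrow> real \<Rightarrow> bool" where
  "const_diameter D \<delta> \<longleftrightarrow> sconvex_body D \<and> sdiameter D = \<delta> \<and>
     (\<forall>p\<in>sboundary D. \<exists>p'\<in>sboundary D. sdist p p' = \<delta>)"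

end

theory Submission
  imports Defs
begin

text \<open>Suppose the arc \<open>ab\<close> lies in \<open>bd(D)\<close>, and let \<open>m\<close> be its midpoint. By constant
  diameter some \<open>p \<in> bd(D)\<close> has \<open>|mp| = \<delta>\<close>, while \<open>|ap|, |bp| \<le> \<delta>\<close> because \<open>\<delta>\<close> is the
  diameter. But a spherical cap of radius \<open>\<delta> < \<pi>/2\<close> is strictly convex: \<open>m\<close> is the chord
  midpoint \<open>c = (a + b)/2\<close> pushed out to the sphere, \<open>c \<bullet> p \<ge> cos \<delta> > 0\<close> and \<open>|c| < 1\<close>, so
  \<open>m \<bullet> p = c \<bullet> p / |c| > cos \<delta>\<close>, i.e. \<open>|mp| < \<delta>\<close>.\<close>

lemma abs_inner_sphere_le_1:
  fixes x y :: "'a::euclidean_space"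
  assumes "x \<in> Sph" "y \<in> Sph"
  shows "\<bar>x \<bullet> y\<bar> \<le> 1"
  using Cauchy_Schwarz_ineq2[of x y] assms by simp

lemma sdist_le_pi:
  fixes x y :: "'a::euclidean_space"
  assumes "x \<in> Sph" "y \<in> Sph"
  shows "sdist x y \<le> pi"
  using abs_inner_sphere_le_1[OF assms] arccos_ubound unfolding sdist_def by auto

lemma sdist_le_iff_cos_le_inner:
  fixes x y :: "'a::euclidean_space"
  assumes "x \<in> Sph" "y \<in> Sph" "0 \<le> \<delta>" "\<delta> \<le> pi"
  shows "sdist x y \<le> \<delta> \<longleftrightarrow> cos \<delta> \<le> x \<bullet> y"
proof -
  have b: "-1 \<le> x \<bullet> y" "x \<bullet> y \<le> 1" using abs_inner_sphere_le_1[OF assms(1,2)] by auto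
  have "sdist x y \<le> \<delta> \<longleftrightarrow> cos \<delta> \<le> cos (arccos (x \<bullet> y))"
    unfolding sdist_def using assms(3,4) arccos_lbound[OF b] arccos_ubound[OF b]
    by (simp add: cos_mono_le_eq)
  with b show ?thesis by simp
qed

lemma sdist_less_iff_cos_less_inner:
  fixes x y :: "'a::euclidean_space"
  assumes "x \<in> Sph" "y \<in> Sph" "0 \<le> \<delta>" "\<delta> \<le> pi"
  shows "sdist x y < \<delta> \<longleftrightarrow> cos \<delta> < x \<bullet> y"
proof -
  have b: "-1 \<le> x \<bullet> y" "x \<bullet> y \<le> 1" using abs_inner_sphere_le_1[OF assms(1,2)] by auto
  have "sdist x y < \<delta> \<longleftrightarrow> cos \<delta> < cos (arccos (x \<bullet> y))"
    unfolding sdist_def using assms(3,4) arccos_lbound[OF b] arccos_ubound[OF b]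
    by (simp add: cos_mono_less_eq)
  with b show ?thesis by simp
qed

lemma sdist_le_sdiameter:
  fixes D :: "'a::euclidean_space set"
  assumes "D \<subseteq> Sph" "x \<in> D" "y \<in> D"
  shows "sdist x y \<le> sdiameter D"
  unfolding sdiameter_def
proof (rule cSup_upper)
  show "sdist x y \<in> {sdist p q |p q. p \<in> D \<and> q \<in> D}" using assms by blast
  show "bdd_above {sdist p q |p q. p \<in> D \<and> q \<in> D}"
    unfolding bdd_above_def using assms(1) sdist_le_pi by blast
qed

lemma sboundary_subset:
  fixes D :: "'a::euclidean_space set"
  assumes "D \<subseteq> Sph" "closed D"
  shows "sboundary D \<subseteq> D"
  unfolding sboundary_def
  using assms by (intro frontier_of_subset_closedin) (simp add: closed_subset)

lemma endpoints_in_sarc: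
  fixes a b :: "'a::euclidean_space"
  assumes "a \<in> Sph" "b \<in> Sph"
  shows "a \<in> sarc a b" "b \<in> sarc a b"
proof -
  have "a /\<^sub>R norm a \<in> sarc a b" "b /\<^sub>R norm b \<in> sarc a b"
    unfolding sarc_def by auto
  with assms show "a \<in> sarc a b" "b \<in> sarc a b" by auto
qed

lemma norm_midpoint_sphere_less_1:
  fixes a b :: "'a::euclidean_space"
  assumes "a \<in> Sph" "b \<in> Sph" "a \<noteq> b"
  shows "norm (midpoint a b) < 1"
proof -
  have "a \<bullet> a = 1" "b \<bullet> b = 1" using assms(1,2) by (simp_all add: norm_eq_1)
  moreover have "0 < (a - b) \<bullet> (a - b)" using assms(3) by simp
  ultimately have "a \<bullet> b < 1" by (simp add: inner_diff inner_commute)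
  moreover have "norm (midpoint a b) ^ 2 = (1 + a \<bullet> b) / 2"
    using \<open>a \<bullet> a = 1\<close> \<open>b \<bullet> b = 1\<close>
    by (simp add: midpoint_def power2_norm_eq_inner inner_commute algebra_simps)
  ultimately have "norm (midpoint a b) ^ 2 < 1 ^ 2" by simp
  then show ?thesis using power_less_imp_less_base by fastforce
qed

lemma midpoint_nonzero:
  fixes a b :: "'a::real_vector"
  assumes "a \<noteq> - b"
  shows "midpoint a b \<noteq> 0"
  using assms by (auto simp: midpoint_eq_iff eq_neg_iff_add_eq_0)

lemma normalized_midpoint_in_sarc:
  fixes a b :: "'a::euclidean_space"
  shows "midpoint a b /\<^sub>R norm (midpoint a b) \<in> sarc a b"
  unfolding sarc_def by simp

lemma sdist_normalized_midpoint_less: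
  fixes a b p :: "'a::euclidean_space"
  assumes a: "a \<in> Sph" and b: "b \<in> Sph" and p: "p \<in> Sph"
    and ab: "a \<noteq> b" "a \<noteq> - b"
    and "0 \<le> \<delta>" "\<delta> < pi / 2"
    and "sdist a p \<le> \<delta>" "sdist b p \<le> \<delta>"
  shows "sdist (midpoint a b /\<^sub>R norm (midpoint a b)) p < \<delta>"
proof -
  let ?c = "midpoint a b"
  have \<delta>: "0 \<le> \<delta>" "\<delta> \<le> pi" using assms(6,7) by auto
  have "cos \<delta> > 0" using assms(6,7) by (intro cos_gt_zero_pi) auto
  have "cos \<delta> \<le> a \<bullet> p" "cos \<delta> \<le> b \<bullet> p"
    using sdist_le_iff_cos_le_inner[OF a p \<delta>] sdist_le_iff_cos_le_inner[OF b p \<delta>] assms(8,9)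
    by simp_all
  then have "cos \<delta> \<le> ?c \<bullet> p"
    by (simp add: midpoint_def inner_add_left)
  have c0: "0 < norm ?c" using midpoint_nonzero[OF ab(2)] by simp
  have c1: "norm ?c < 1" using norm_midpoint_sphere_less_1[OF a b ab(1)] .
  have "norm ?c * cos \<delta> < cos \<delta>" using c1 \<open>cos \<delta> > 0\<close> by simp
  also have "\<dots> \<le> ?c \<bullet> p" by fact
  finally have "cos \<delta> < (?c \<bullet> p) / norm ?c"
    using c0 by (simp add: pos_less_divide_eq mult.commute)
  then have "cos \<delta> < (?c /\<^sub>R norm ?c) \<bullet> p"
    by (simp add: divide_inverse_commute)
  moreover have "?c /\<^sub>R norm ?c \<in> Sph" using c0 by simp
  ultimately show ?thesis
    using sdist_less_iff_cos_less_inner[OF _ p \<delta>] by blast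
qed

theorem proposition1:
  fixes D :: "'a::euclidean_space set" and \<delta> :: real
  assumes "DIM('a) \<ge> 3"
    and "0 < \<delta>" and "\<delta> < pi / 2"
    and "const_diameter D \<delta>"
  shows "\<not> (\<exists>a\<in>Sph. \<exists>b\<in>Sph. a \<noteq> b \<and> a \<noteq> - b \<and> sarc a b \<subseteq> sboundary D)"
proof
  assume "\<exists>a\<in>Sph. \<exists>b\<in>Sph. a \<noteq> b \<and> a \<noteq> - b \<and> sarc a b \<subseteq> sboundary D"
  then obtain a b :: 'a where a: "a \<in> Sph" and b: "b \<in> Sph" and ab: "a \<noteq> b" "a \<noteq> - b"
    and arc: "sarc a b \<subseteq> sboundary D" by blast
  have DS: "D \<subseteq> Sph" and bd: "sboundary D \<subseteq> D" and diam: "sdiameter D = \<delta>"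
    and partner: "\<forall>p\<in>sboundary D. \<exists>p'\<in>sboundary D. sdist p p' = \<delta>"
    using assms(4) sboundary_subset
    unfolding const_diameter_def sconvex_body_def sconvex_def by auto
  define m where "m = midpoint a b /\<^sub>R norm (midpoint a b)"
  have "m \<in> sboundary D" using arc normalized_midpoint_in_sarc unfolding m_def by blast
  then obtain p where p: "p \<in> sboundary D" and "sdist m p = \<delta>" using partner by blast
  moreover have "a \<in> D" "b \<in> D" "p \<in> D" using endpoints_in_sarc[OF a b] arc bd p by auto
  then have "sdist a p \<le> \<delta>" "sdist b p \<le> \<delta>" using sdist_le_sdiameter[OF DS] diam by auto
  then have "sdist m p < \<delta>"
    unfolding m_def using sdist_normalized_midpoint_less[OF a b _ ab] \<open>p \<in> D\<close> DS assms(2,3)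
    by auto
  ultimately show False by simp
qed

end
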